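(* Let $G$ be a finite two-player zero-sum game with finite pure strategy sets $S_1,S_2$ and payoffs $v_1=-v_2$, extended bilinearly to mixed strategies. Run Anytime Double Oracle (ADO) from nonempty initial populations $\Pi^0_1\subseteq S_1$, $\Pi^0_2\subseteq S_2$: at each iteration $t=0,1,\ldots$, for each $i\in\{1,2\}$ let $\pi^t_i$ be a mixed strategy satisfying $$\pi^t_i\in\arg\max_{\sigma_i\in\Delta(\Pi^t_i)}\ \min_{\sigma_{-i}\in\Delta(S_{-i})} v_i(\sigma_i,\sigma_{-i}),$$ then for each $i$ choose a pure best response $\beta_i$ of player $i$ to $\pi^t_{-i}$ (a novel one $\beta_i\notin\Pi^t_i$ if such a best response exists) and set $\Pi^{t+1}_i=\Pi^t_i\cup\{\beta_i\}$. Then for every iteration $t$ for which $\pi^{t+1}$ is defined, $e(\pi^{t+1})\le e(\pi^t)$; that is, the exploitability of the ADO restricted profile is monotonically non-increasing.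
   Context: $\Delta(\Pi_i)$ denotes the set of mixed strategies of player $i$ supported on $\Pi_i$. The exploitability of a mixed strategy profile $\pi=(\pi_1,\pi_2)$ is $e(\pi)=\sum_{i\in\{1,2\}}\max_{\pi_i'}v_i(\pi_i',\pi_{-i})$, where the maximum is over all mixed strategies of player $i$ in the full game. A best response of player $i$ to $\pi_{-i}$ is a strategy maximizing $v_i(\cdot,\pi_{-i})$. *)

theory Defs
  imports Complex_Main
begin

definition mixed :: "'a set \<Rightarrow> ('a \<Rightarrow> real) set" where
  "mixed A = {\<sigma>. (\<forall>x. 0 \<le> \<sigma> x) \<and> (\<forall>x. x \<notin> A \<longrightarrow> \<sigma> x = 0) \<and> sum \<sigma> A = 1}"

definition pure :: "'a \<Rightarrow> 'a \<Rightarrow> real" where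
  "pure a = (\<lambda>x. if x = a then 1 else 0)"

definition pay1 :: "'a set \<Rightarrow> 'b set \<Rightarrow> ('a \<Rightarrow> 'b \<Rightarrow> real) \<Rightarrow> ('a \<Rightarrow> real) \<Rightarrow> ('b \<Rightarrow> real) \<Rightarrow> real" where
  "pay1 S1 S2 u \<sigma>1 \<sigma>2 = (\<Sum>a\<in>S1. \<Sum>b\<in>S2. \<sigma>1 a * \<sigma>2 b * u a b)"

definition pay2 :: "'a set \<Rightarrow> 'b set \<Rightarrow> ('a \<Rightarrow> 'b \<Rightarrow> real) \<Rightarrow> ('b \<Rightarrow> real) \<Rightarrow> ('a \<Rightarrow> real) \<Rightarrow> real" where
  "pay2 S1 S2 u \<sigma>2 \<sigma>1 = - pay1 S1 S2 u \<sigma>1 \<sigma>2"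

definition maximin1 where
  "maximin1 S1 S2 u P \<pi> \<longleftrightarrow> \<pi> \<in> mixed P \<and>
     (\<forall>\<sigma>\<in>mixed P. (INF \<tau>\<in>mixed S2. pay1 S1 S2 u \<sigma> \<tau>) \<le> (INF \<tau>\<in>mixed S2. pay1 S1 S2 u \<pi> \<tau>))"

definition maximin2 where
  "maximin2 S1 S2 u P \<pi> \<longleftrightarrow> \<pi> \<in> mixed P \<and>
     (\<forall>\<sigma>\<in>mixed P. (INF \<tau>\<in>mixed S1. pay2 S1 S2 u \<sigma> \<tau>) \<le> (INF \<tau>\<in>mixed S1. pay2 S1 S2 u \<pi> \<tau>))"

definition pure_br1 where
  "pure_br1 S1 S2 u \<pi>2 b \<longleftrightarrow> b \<in> S1 \<and>
     (\<forall>\<sigma>\<in>mixed S1. pay1 S1 S2 u \<sigma> \<pi>2 \<le> pay1 S1 S2 u (pure b) \<pi>2)"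

definition pure_br2 where
  "pure_br2 S1 S2 u \<pi>1 b \<longleftrightarrow> b \<in> S2 \<and>
     (\<forall>\<sigma>\<in>mixed S2. pay2 S1 S2 u \<sigma> \<pi>1 \<le> pay2 S1 S2 u (pure b) \<pi>1)"

definition exploitability where
  "exploitability S1 S2 u \<pi>1 \<pi>2 =
     (SUP \<sigma>\<in>mixed S1. pay1 S1 S2 u \<sigma> \<pi>2) + (SUP \<sigma>\<in>mixed S2. pay2 S1 S2 u \<sigma> \<pi>1)"

end

theory Submission
  imports Defs
begin

text \<open>In a zero-sum game the best-response payoff of one player against \<open>\<pi>\<^sub>-\<^sub>i\<close> is minus
  the payoff that \<open>\<pi>\<^sub>-\<^sub>i\<close> guarantees, so the exploitability of a profile is minus the sum of the
  security values of its two components. ADO only ever enlarges the populations, so every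
  strategy in \<open>\<Delta>(\<Pi>\<^sup>t\<^sub>i)\<close> is still available at iteration \<open>t+1\<close> and the restricted maximin
  value of each player cannot decrease.\<close>

lemma finite_if_mixed: "\<sigma> \<in> mixed A \<Longrightarrow> finite A"
  by (auto simp: mixed_def intro: ccontr)

lemma mixed_mono:
  assumes "A \<subseteq> B" and "finite B"
  shows "mixed A \<subseteq> mixed B"
proof
  fix \<sigma> assume \<sigma>: "\<sigma> \<in> mixed A"
  then have "sum \<sigma> B = sum \<sigma> A"
    using assms by (intro sum.mono_neutral_right) (auto simp: mixed_def)
  with \<sigma> assms(1) show "\<sigma> \<in> mixed B"
    by (auto simp: mixed_def)
qed

lemma maximin1_value_mono:
  assumes "maximin1 S1 S2 u P \<pi>" and "maximin1 S1 S2 u P' \<pi>'" and "P \<subseteq> P'"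
  shows "(INF \<tau>\<in>mixed S2. pay1 S1 S2 u \<pi> \<tau>) \<le> (INF \<tau>\<in>mixed S2. pay1 S1 S2 u \<pi>' \<tau>)"
proof -
  have "\<pi> \<in> mixed P'"
    using assms mixed_mono finite_if_mixed by (fastforce simp: maximin1_def)
  with assms(2) show ?thesis
    by (simp add: maximin1_def)
qed

lemma maximin2_value_mono:
  assumes "maximin2 S1 S2 u P \<pi>" and "maximin2 S1 S2 u P' \<pi>'" and "P \<subseteq> P'"
  shows "(INF \<tau>\<in>mixed S1. pay2 S1 S2 u \<pi> \<tau>) \<le> (INF \<tau>\<in>mixed S1. pay2 S1 S2 u \<pi>' \<tau>)"
proof -
  have "\<pi> \<in> mixed P'"
    using assms mixed_mono finite_if_mixed by (fastforce simp: maximin2_def)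
  with assms(2) show ?thesis
    by (simp add: maximin2_def)
qed

text \<open>No boundedness is needed: for reals \<open>SUP (- f) = - INF f\<close> holds by the definition of
  \<open>Inf\<close>.\<close>
lemma exploitability_eq_neg_security_values:
  "exploitability S1 S2 u \<pi>1 \<pi>2 =
     - (INF \<tau>\<in>mixed S2. pay1 S1 S2 u \<pi>1 \<tau>) - (INF \<tau>\<in>mixed S1. pay2 S1 S2 u \<pi>2 \<tau>)"
proof -
  have "(SUP \<sigma>\<in>mixed S1. pay1 S1 S2 u \<sigma> \<pi>2) = - (INF \<tau>\<in>mixed S1. pay2 S1 S2 u \<pi>2 \<tau>)"
    and "(SUP \<sigma>\<in>mixed S2. pay2 S1 S2 u \<sigma> \<pi>1) = - (INF \<tau>\<in>mixed S2. pay1 S1 S2 u \<pi>1 \<tau>)"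
    by (simp_all add: Inf_real_def pay2_def image_image)
  then show ?thesis
    by (simp add: exploitability_def)
qed

theorem proposition1:
  fixes S1 :: "'a set" and S2 :: "'b set" and u :: "'a \<Rightarrow> 'b \<Rightarrow> real"
    and P1 :: "nat \<Rightarrow> 'a set" and P2 :: "nat \<Rightarrow> 'b set"
    and p1 :: "nat \<Rightarrow> 'a \<Rightarrow> real" and p2 :: "nat \<Rightarrow> 'b \<Rightarrow> real"
    and b1 :: "nat \<Rightarrow> 'a" and b2 :: "nat \<Rightarrow> 'b" and t :: nat
  assumes "finite S1" and "finite S2"
    and "P1 0 \<subseteq> S1" and "P1 0 \<noteq> {}" and "P2 0 \<subseteq> S2" and "P2 0 \<noteq> {}"
    and maxmin1: "\<And>s. s \<le> Suc t \<Longrightarrow> maximin1 S1 S2 u (P1 s) (p1 s)"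
    and maxmin2: "\<And>s. s \<le> Suc t \<Longrightarrow> maximin2 S1 S2 u (P2 s) (p2 s)"
    and br1: "\<And>s. s \<le> t \<Longrightarrow> pure_br1 S1 S2 u (p2 s) (b1 s)"
    and br2: "\<And>s. s \<le> t \<Longrightarrow> pure_br2 S1 S2 u (p1 s) (b2 s)"
    and novel1: "\<And>s. s \<le> t \<Longrightarrow> (\<exists>b. pure_br1 S1 S2 u (p2 s) b \<and> b \<notin> P1 s) \<Longrightarrow> b1 s \<notin> P1 s"
    and novel2: "\<And>s. s \<le> t \<Longrightarrow> (\<exists>b. pure_br2 S1 S2 u (p1 s) b \<and> b \<notin> P2 s) \<Longrightarrow> b2 s \<notin> P2 s"
    and upd1: "\<And>s. s \<le> t \<Longrightarrow> P1 (Suc s) = insert (b1 s) (P1 s)"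
    and upd2: "\<And>s. s \<le> t \<Longrightarrow> P2 (Suc s) = insert (b2 s) (P2 s)"
  shows "exploitability S1 S2 u (p1 (Suc t)) (p2 (Suc t)) \<le> exploitability S1 S2 u (p1 t) (p2 t)"
proof -
  have "(INF \<tau>\<in>mixed S2. pay1 S1 S2 u (p1 t) \<tau>) \<le> (INF \<tau>\<in>mixed S2. pay1 S1 S2 u (p1 (Suc t)) \<tau>)"
    using maxmin1[of t] maxmin1[of "Suc t"] upd1[of t] by (intro maximin1_value_mono) auto
  moreover
  have "(INF \<tau>\<in>mixed S1. pay2 S1 S2 u (p2 t) \<tau>) \<le> (INF \<tau>\<in>mixed S1. pay2 S1 S2 u (p2 (Suc t)) \<tau>)"
    using maxmin2[of t] maxmin2[of "Suc t"] upd2[of t] by (intro maximin2_value_mono) auto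
  ultimately show ?thesis
    by (simp add: exploitability_eq_neg_security_values)
qed

end
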